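(* Let $\mathcal{H}=(V,E)$ be a hypergraph, and consider the mixed integer linear program with variables $w_R\in[0,1]$ for each $R\in E$ and $t_x\in\{0,1\}$ for each $x\in V$: maximize $\sum_{R\in E}w_R$ subject to (a) for all $x\in V$: $\sum_{R\in E: x\in R}w_R\le t_x+(1-t_x)L$; (b) for all $R\in E$: $w_R\le\sum_{x\in R}t_x$; (c) for all $U,W\in E$ and all $y\in U\setminus W$: $w_W\le 1+\sum_{x\in W\setminus U}t_x-t_y$. Fix values of the $t$ variables and let $S=\{x\in V: t_x=1\}$. Then the optimal objective value of the program (optimizing over $w$ with $t$ fixed) is $\tau^*(\mathsf{red}(\mathcal{H}[S]))$.
   Context: $L$ is a fixed large number (large enough that constraint (a) is vacuous when $t_x=0$, e.g. $L\ge|E|$). $\mathcal{H}[S]$ is the hypergraph with vertex set $S$ and edges $\{S\cap e: e\in E, S\cap e\ne\emptyset\}$; $\mathsf{red}$ removes every edge $e$ contained in another edge $e'\ne e$. $\tau^*$ is the value of a maximum fractional edge packing (equivalently, minimum fractional vertex cover); the empty hypergraph has $\tau^*=0$. *)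

theory Defs
  imports Complex_Main
begin

type_synonym 'a hypergraph = "'a set \<times> 'a set set"

definition hypergraph :: "'a hypergraph \<Rightarrow> bool" where
  "hypergraph H \<longleftrightarrow> finite (fst H) \<and> (\<forall>e\<in>snd H. e \<subseteq> fst H)"

definition induced :: "'a hypergraph \<Rightarrow> 'a set \<Rightarrow> 'a hypergraph" where
  "induced H S = (S, {S \<inter> e | e. e \<in> snd H \<and> S \<inter> e \<noteq> {}})"

definition red :: "'a hypergraph \<Rightarrow> 'a hypergraph" where
  "red H = (fst H, {e \<in> snd H. \<not> (\<exists>e'\<in>snd H. e \<subseteq> e' \<and> e' \<noteq> e)})"

definition frac_edge_packing :: "'a hypergraph \<Rightarrow> ('a set \<Rightarrow> real) \<Rightarrow> bool" where
  "frac_edge_packing H y \<longleftrightarrow>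
     (\<forall>f\<in>snd H. 0 \<le> y f) \<and>
     (\<forall>v\<in>fst H. (\<Sum>f\<in>{f\<in>snd H. v \<in> f}. y f) \<le> 1)"

definition tau_star :: "'a hypergraph \<Rightarrow> real" where
  "tau_star H = Sup {(\<Sum>f\<in>snd H. y f) | y. frac_edge_packing H y}"

definition milp_feasible ::
  "'a hypergraph \<Rightarrow> real \<Rightarrow> ('a \<Rightarrow> real) \<Rightarrow> ('a set \<Rightarrow> real) \<Rightarrow> bool" where
  "milp_feasible H L t w \<longleftrightarrow>
     (\<forall>R\<in>snd H. 0 \<le> w R \<and> w R \<le> 1) \<and>
     (\<forall>x\<in>fst H. (\<Sum>R\<in>{R\<in>snd H. x \<in> R}. w R) \<le> t x + (1 - t x) * L) \<and>
     (\<forall>R\<in>snd H. w R \<le> (\<Sum>x\<in>R. t x)) \<and>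
     (\<forall>U\<in>snd H. \<forall>W\<in>snd H. \<forall>y\<in>U - W.
        w W \<le> 1 + (\<Sum>x\<in>W - U. t x) - t y)"

end

theory Submission imports Defs "HOL-Analysis.Analysis" begin

text \<open>
  Let the reduced traces \<open>F\<close> be the edges of \<open>red(H[S])\<close>. A feasible \<open>w\<close> vanishes on every edge \<open>W\<close> whose trace
  \<open>S \<inter> W\<close> is not in \<open>F\<close>: if the trace is empty, constraint (b) kills \<open>w W\<close>; otherwise it lies
  strictly inside a trace \<open>S \<inter> U\<close>, and constraint (c) for a vertex of \<open>S \<inter> U - W\<close> does.
  Summing \<open>w\<close> over the edges with a given trace therefore yields a fractional edge packing of
  \<open>red(H[S])\<close> with the same value, by constraint (a) at the vertices of \<open>S\<close>.
  Conversely a maximum packing, which exists by compactness, is placed on one representative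
  edge per trace in \<open>F\<close>; constraint (c) then holds because no trace in \<open>F\<close> is strictly contained
  in another trace, and (a) holds off \<open>S\<close> because \<open>L \<ge> |E|\<close>.
\<close>

lemma hypergraph_finite_edges: "hypergraph H \<Longrightarrow> finite (snd H)"
  unfolding hypergraph_def by (meson finite_Pow_iff finite_subset subsetI PowI)

lemma frac_edge_packing_le_1:
  assumes "finite (snd H)" and "frac_edge_packing H y"
    and "f \<in> snd H" and "f \<noteq> {}" and "f \<subseteq> fst H"
  shows "y f \<le> 1"
proof -
  obtain v where v: "v \<in> f" using assms(4) by blast
  have "y f \<le> (\<Sum>g\<in>{g\<in>snd H. v \<in> g}. y g)"
    by (rule member_le_sum) (use assms v in \<open>auto simp: frac_edge_packing_def\<close>)
  also have "\<dots> \<le> 1" using assms(2,5) v by (auto simp: frac_edge_packing_def)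
  finally show ?thesis .
qed

lemma compact_frac_edge_packings:
  assumes "hypergraph H" and "{} \<notin> snd H"
  shows "compact {y. frac_edge_packing H y \<and> (\<forall>f. f \<notin> snd H \<longrightarrow> y f = 0)}"
proof -
  define B where "B f = (if f \<in> snd H then {0..1::real} else {0})" for f
  have "compactin (product_topology (\<lambda>_. euclidean) UNIV) (PiE UNIV B)"
    unfolding compactin_PiE by (auto simp: B_def)
  then have "compact (Pi UNIV B)"
    by (simp add: euclidean_product_topology PiE_UNIV_domain)
  moreover have "closed (\<Inter>v\<in>fst H. {y :: 'a set \<Rightarrow> real. sum y {f\<in>snd H. v \<in> f} \<le> 1})"
    by (intro closed_INT ballI closed_Collect_le continuous_on_sum continuous_on_const
        continuous_on_product_coordinates)
  moreover have "{y. frac_edge_packing H y \<and> (\<forall>f. f \<notin> snd H \<longrightarrow> y f = 0)}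
      = Pi UNIV B \<inter> (\<Inter>v\<in>fst H. {y. sum y {f\<in>snd H. v \<in> f} \<le> 1})"
  proof (intro set_eqI iffI)
    fix y assume y: "y \<in> {y. frac_edge_packing H y \<and> (\<forall>f. f \<notin> snd H \<longrightarrow> y f = 0)}"
    have "y f \<le> 1" if "f \<in> snd H" for f
      using frac_edge_packing_le_1[OF hypergraph_finite_edges[OF assms(1)], of y f] y that assms
      by (auto simp: hypergraph_def)
    then show "y \<in> Pi UNIV B \<inter> (\<Inter>v\<in>fst H. {y. sum y {f\<in>snd H. v \<in> f} \<le> 1})"
      using y by (auto simp: B_def frac_edge_packing_def)
  next
    fix y assume y: "y \<in> Pi UNIV B \<inter> (\<Inter>v\<in>fst H. {y. sum y {f\<in>snd H. v \<in> f} \<le> 1})"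
    then have B: "y f \<in> B f" for f by blast
    have "f \<in> snd H \<Longrightarrow> 0 \<le> y f" and "f \<notin> snd H \<Longrightarrow> y f = 0" for f
      using B[of f] by (simp_all add: B_def)
    then show "y \<in> {y. frac_edge_packing H y \<and> (\<forall>f. f \<notin> snd H \<longrightarrow> y f = 0)}"
      using y by (simp add: frac_edge_packing_def)
  qed
  ultimately show ?thesis by (simp add: compact_Int_closed)
qed

lemma ex_max_frac_edge_packing:
  assumes "hypergraph H" and "{} \<notin> snd H"
  obtains y where "frac_edge_packing H y"
    and "\<And>z. frac_edge_packing H z \<Longrightarrow> sum z (snd H) \<le> sum y (snd H)"
proof -
  define K where "K = {y. frac_edge_packing H y \<and> (\<forall>f. f \<notin> snd H \<longrightarrow> y f = 0)}"
  have "compact K" unfolding K_def using assms by (rule compact_frac_edge_packings)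
  moreover have "(\<lambda>_. 0) \<in> K" by (auto simp: K_def frac_edge_packing_def)
  moreover have "continuous_on K (\<lambda>y. sum y (snd H))"
    by (intro continuous_on_sum continuous_on_subset[OF continuous_on_product_coordinates]) auto
  ultimately obtain y where y: "y \<in> K" and y_max: "\<And>z. z \<in> K \<Longrightarrow> sum z (snd H) \<le> sum y (snd H)"
    using continuous_attains_sup by (metis empty_iff)
  show ?thesis
  proof
    show "frac_edge_packing H y" using y by (simp add: K_def)
  next
    fix z assume z: "frac_edge_packing H z"
    define z' where "z' f = (if f \<in> snd H then z f else 0)" for f
    have "sum z' {f\<in>snd H. v \<in> f} = sum z {f\<in>snd H. v \<in> f}" for v
      by (rule sum.cong) (auto simp: z'_def)
    then have "z' \<in> K" using z by (simp add: K_def frac_edge_packing_def z'_def)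
    then have "sum z' (snd H) \<le> sum y (snd H)" by (rule y_max)
    moreover have "sum z' (snd H) = sum z (snd H)" by (rule sum.cong) (auto simp: z'_def)
    ultimately show "sum z (snd H) \<le> sum y (snd H)" by simp
  qed
qed

lemma tau_star_eq_max_frac_edge_packing:
  assumes "frac_edge_packing H y"
    and "\<And>z. frac_edge_packing H z \<Longrightarrow> sum z (snd H) \<le> sum y (snd H)"
  shows "tau_star H = sum y (snd H)"
  unfolding tau_star_def by (rule cSup_eq_maximum) (use assms in auto)

locale hypergraph_selection =
  fixes V :: "'a set" and E :: "'a set set" and t :: "'a \<Rightarrow> real" and S :: "'a set"
  assumes hypergraph: "hypergraph (V, E)"
    and t_01: "\<forall>x\<in>V. t x \<in> {0, 1}"
    and S_def: "S = {x \<in> V. t x = 1}"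
begin

lemma finite_V: "finite V" and edge_subset: "W \<in> E \<Longrightarrow> W \<subseteq> V" and finite_E: "finite E"
  using hypergraph hypergraph_finite_edges[OF hypergraph] by (auto simp: hypergraph_def)

lemma sum_t_eq_card: "R \<subseteq> V \<Longrightarrow> sum t R = card (S \<inter> R)"
proof -
  assume R: "R \<subseteq> V"
  then have "finite R" using finite_V finite_subset by blast
  then have "sum t R = sum t (S \<inter> R) + sum t (R - S)" by (metis sum.Int_Diff Int_commute)
  also have "sum t (S \<inter> R) = card (S \<inter> R)" by (simp add: S_def)
  also have "sum t (R - S) = 0" by (rule sum.neutral) (use R t_01 in \<open>auto simp: S_def\<close>)
  finally show ?thesis by simp
qed

lemma sum_t_diff_eq_card: "W \<in> E \<Longrightarrow> sum t (W - U) = card (S \<inter> (W - U))"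
  using edge_subset[of W] by (subst sum_t_eq_card) auto

lemma sum_t_nonneg: "W \<in> E \<Longrightarrow> 0 \<le> sum t (W - U)"
  by (simp add: sum_t_diff_eq_card)

definition reduced_traces :: "'a set set" where
  "reduced_traces = snd (red (induced (V, E) S))"

lemma reduced_traces_iff:
  "T \<in> reduced_traces \<longleftrightarrow> (\<exists>W\<in>E. T = S \<inter> W) \<and> T \<noteq> {} \<and> (\<forall>U\<in>E. \<not> T \<subset> S \<inter> U)"
  unfolding reduced_traces_def red_def induced_def by auto

lemma hypergraph_reduced_traces: "hypergraph (S, reduced_traces)"
proof -
  have "reduced_traces \<subseteq> Pow S" by (auto simp: reduced_traces_iff)
  then show ?thesis using finite_V by (auto simp: hypergraph_def S_def)
qed

lemma finite_reduced_traces: "finite reduced_traces"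
  using hypergraph_finite_edges[OF hypergraph_reduced_traces] by simp

lemma feasible_vanishes_off_reduced_traces:
  assumes w: "milp_feasible (V, E) L t w" and W: "W \<in> E" "S \<inter> W \<notin> reduced_traces"
  shows "w W = 0"
proof (cases "S \<inter> W = {}")
  case True
  then show ?thesis using w W sum_t_eq_card[OF edge_subset] by (force simp: milp_feasible_def)
next
  case False
  then obtain U where U: "U \<in> E" "S \<inter> W \<subset> S \<inter> U" using W by (auto simp: reduced_traces_iff)
  then obtain y where y: "y \<in> S \<inter> U" "y \<notin> W" by blast
  have "w W \<le> 1 + sum t (W - U) - t y" using w U(1) W(1) y by (auto simp: milp_feasible_def)
  moreover have "S \<inter> (W - U) = {}" using U(2) by blast
  then have "sum t (W - U) = 0" using sum_t_diff_eq_card[OF W(1)] by simp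
  moreover have "t y = 1" using y by (simp add: S_def)
  ultimately show ?thesis using w W(1) by (force simp: milp_feasible_def)
qed

definition collapse :: "('a set \<Rightarrow> real) \<Rightarrow> 'a set \<Rightarrow> real" where
  "collapse w T = sum w {W \<in> E. S \<inter> W = T}"

lemma sum_collapse:
  assumes "finite B"
  shows "sum (collapse w) B = sum w {W \<in> E. S \<inter> W \<in> B}"
proof -
  have "sum w {W \<in> E. S \<inter> W \<in> B} = (\<Sum>T\<in>B. sum w {W \<in> {W \<in> E. S \<inter> W \<in> B}. S \<inter> W = T})"
    by (rule sum.group[symmetric]) (use assms finite_E in auto)
  also have "\<dots> = sum (collapse w) B"
    unfolding collapse_def by (intro sum.cong refl arg_cong[where f = "sum w"]) auto
  finally show ?thesis ..
qed

lemma sum_collapse_reduced_traces: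
  assumes "milp_feasible (V, E) L t w"
  shows "sum (collapse w) reduced_traces = sum w E"
  unfolding sum_collapse[OF finite_reduced_traces]
  by (rule sum.mono_neutral_left) (use finite_E feasible_vanishes_off_reduced_traces[OF assms] in auto)

lemma collapse_frac_edge_packing:
  assumes w: "milp_feasible (V, E) L t w"
  shows "frac_edge_packing (S, reduced_traces) (collapse w)"
  unfolding frac_edge_packing_def fst_conv snd_conv
proof (intro conjI ballI)
  have w0: "\<And>W. W \<in> E \<Longrightarrow> 0 \<le> w W" using w by (simp add: milp_feasible_def)
  show "0 \<le> collapse w T" for T unfolding collapse_def by (rule sum_nonneg) (simp add: w0)
  fix v assume v: "v \<in> S"
  have "sum (collapse w) {T \<in> reduced_traces. v \<in> T}
      = sum w {W \<in> E. S \<inter> W \<in> {T \<in> reduced_traces. v \<in> T}}"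
    by (rule sum_collapse) (simp add: finite_reduced_traces)
  also have "\<dots> \<le> sum w {W \<in> E. v \<in> W}" by (rule sum_mono2) (auto simp: finite_E w0)
  also have "\<dots> \<le> 1" using w v by (auto simp: milp_feasible_def S_def)
  finally show "sum (collapse w) {T \<in> reduced_traces. v \<in> T} \<le> 1" .
qed

definition representative :: "'a set \<Rightarrow> 'a set" where
  "representative T = (SOME W. W \<in> E \<and> S \<inter> W = T)"

lemma representative:
  assumes "T \<in> reduced_traces"
  shows "representative T \<in> E" and "S \<inter> representative T = T"
proof -
  have "\<exists>W. W \<in> E \<and> S \<inter> W = T" using assms by (auto simp: reduced_traces_iff)
  then have "representative T \<in> E \<and> S \<inter> representative T = T"
    unfolding representative_def by (rule someI_ex)
  then show "representative T \<in> E" and "S \<inter> representative T = T" by auto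
qed

lemma inj_on_representative: "inj_on representative reduced_traces"
  by (rule inj_onI) (metis representative(2))

definition lift :: "('a set \<Rightarrow> real) \<Rightarrow> 'a set \<Rightarrow> real" where
  "lift y R = (if R \<in> representative ` reduced_traces then y (S \<inter> R) else 0)"

lemma lift_representative: "T \<in> reduced_traces \<Longrightarrow> lift y (representative T) = y T"
  by (simp add: lift_def representative(2))

lemma sum_lift: "sum (lift y) {R \<in> E. P R} = sum y {T \<in> reduced_traces. P (representative T)}"
proof -
  have "sum (lift y) {R \<in> E. P R} = sum (lift y) {R \<in> representative ` reduced_traces. P R}"
    by (rule sum.mono_neutral_right) (use finite_E representative(1) in \<open>auto simp: lift_def\<close>)
  also have "{R \<in> representative ` reduced_traces. P R}
      = representative ` {T \<in> reduced_traces. P (representative T)}" by auto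
  also have "sum (lift y) \<dots> = sum (lift y \<circ> representative) {T \<in> reduced_traces. P (representative T)}"
    by (rule sum.reindex) (rule inj_on_subset[OF inj_on_representative], auto)
  also have "\<dots> = sum y {T \<in> reduced_traces. P (representative T)}"
    by (rule sum.cong) (auto simp: lift_representative)
  finally show ?thesis .
qed

lemma reduced_trace_exchange:
  assumes "S \<inter> W \<in> reduced_traces" and "U \<in> E" and "W \<in> E" and "y \<in> U - W"
  shows "t y \<le> sum t (W - U)"
proof (cases "t y = 1")
  case True
  then have "y \<in> S \<inter> U - W" using assms(2,4) edge_subset by (auto simp: S_def)
  then have "\<not> S \<inter> W \<subseteq> S \<inter> U" using assms(1,2) by (auto simp: reduced_traces_iff)
  then have "S \<inter> (W - U) \<noteq> {}" by blast
  moreover have "finite (S \<inter> (W - U))" using finite_V by (simp add: S_def)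
  ultimately have "1 \<le> card (S \<inter> (W - U))" by (simp add: Suc_le_eq card_gt_0_iff)
  then show ?thesis using True sum_t_diff_eq_card[OF assms(3)] by simp
next
  case False
  then have "t y = 0" using t_01 assms(2,4) edge_subset by blast
  then show ?thesis using sum_t_nonneg[OF assms(3)] by simp
qed

context
  fixes y :: "'a set \<Rightarrow> real"
  assumes packing: "frac_edge_packing (S, reduced_traces) y"
begin

lemma lift_bounds: "0 \<le> lift y R \<and> lift y R \<le> 1"
proof -
  have "0 \<le> y T \<and> y T \<le> 1" if "T \<in> reduced_traces" for T
    using that packing frac_edge_packing_le_1[of "(S, reduced_traces)" y T] finite_reduced_traces
      reduced_traces_iff
    by (auto simp: frac_edge_packing_def)
  then show ?thesis by (auto simp: lift_def representative(2))
qed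

lemma lift_le_sum_t:
  assumes R: "R \<in> E"
  shows "lift y R \<le> sum t R"
proof (cases "R \<in> representative ` reduced_traces")
  case True
  then have "S \<inter> R \<noteq> {}" by (auto simp: representative(2) reduced_traces_iff)
  moreover have "finite (S \<inter> R)" using finite_V by (simp add: S_def)
  ultimately have "1 \<le> card (S \<inter> R)" by (simp add: Suc_le_eq card_gt_0_iff)
  then show ?thesis using lift_bounds[of R] sum_t_eq_card[OF edge_subset[OF R]] by simp
next
  case False
  then show ?thesis using sum_t_eq_card[OF edge_subset[OF R]] by (simp add: lift_def)
qed

lemma sum_lift_incident_le:
  assumes x: "x \<in> V" and L: "L \<ge> real (card E)"
  shows "sum (lift y) {R \<in> E. x \<in> R} \<le> t x + (1 - t x) * L"
proof (cases "t x = 1")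
  case True
  then have "x \<in> S" using x by (simp add: S_def)
  then have "{T \<in> reduced_traces. x \<in> representative T} = {T \<in> reduced_traces. x \<in> T}"
    using representative(2) by blast
  then have "sum (lift y) {R \<in> E. x \<in> R} = sum y {T \<in> reduced_traces. x \<in> T}"
    by (simp add: sum_lift)
  also have "\<dots> \<le> 1" using packing \<open>x \<in> S\<close> by (simp add: frac_edge_packing_def)
  finally show ?thesis using True by simp
next
  case False
  then have "t x = 0" using t_01 x by blast
  have "sum (lift y) {R \<in> E. x \<in> R} \<le> card {R \<in> E. x \<in> R}"
    using sum_mono[of "{R \<in> E. x \<in> R}" "lift y" "\<lambda>_. 1"] lift_bounds by simp
  also have "\<dots> \<le> card E" by (simp add: card_mono finite_E)
  finally show ?thesis using \<open>t x = 0\<close> L by simp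
qed

lemma lift_exchange:
  assumes "U \<in> E" and "W \<in> E" and "z \<in> U - W"
  shows "lift y W \<le> 1 + sum t (W - U) - t z"
proof (cases "S \<inter> W \<in> reduced_traces")
  case True
  then show ?thesis using reduced_trace_exchange[OF True assms] lift_bounds[of W] by linarith
next
  case False
  then have "lift y W = 0" by (auto simp: lift_def representative(2))
  moreover have "t z \<le> 1" using t_01 assms(1,3) edge_subset by fastforce
  ultimately show ?thesis using sum_t_nonneg[OF assms(2), of U] by linarith
qed

lemma lift_feasible: "L \<ge> real (card E) \<Longrightarrow> milp_feasible (V, E) L t (lift y)"
  unfolding milp_feasible_def fst_conv snd_conv
  using lift_bounds lift_le_sum_t sum_lift_incident_le lift_exchange by blast

end

end

theorem lemmaA1:
  fixes V :: "'a set" and E :: "'a set set" and L :: real and t :: "'a \<Rightarrow> real"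
  assumes "hypergraph (V, E)"
    and "L \<ge> real (card E)"
    and "\<forall>x\<in>V. t x \<in> {0, 1}"
  defines "S \<equiv> {x \<in> V. t x = 1}"
  shows "(\<exists>w. milp_feasible (V, E) L t w \<and> (\<Sum>R\<in>E. w R) = tau_star (red (induced (V, E) S)))
       \<and> (\<forall>w. milp_feasible (V, E) L t w \<longrightarrow> (\<Sum>R\<in>E. w R) \<le> tau_star (red (induced (V, E) S)))"
proof -
  interpret hypergraph_selection V E t S
    using assms(1,3) by unfold_locales (simp_all add: S_def)
  have red_eq: "red (induced (V, E) S) = (S, reduced_traces)"
    by (simp add: reduced_traces_def red_def induced_def)
  have "{} \<notin> reduced_traces" by (simp add: reduced_traces_iff)
  then obtain y where y: "frac_edge_packing (S, reduced_traces) y"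
    and y_max: "\<And>z. frac_edge_packing (S, reduced_traces) z \<Longrightarrow> sum z reduced_traces \<le> sum y reduced_traces"
    using ex_max_frac_edge_packing[OF hypergraph_reduced_traces] by auto
  have tau: "tau_star (red (induced (V, E) S)) = sum y reduced_traces"
    using tau_star_eq_max_frac_edge_packing[of "(S, reduced_traces)" y] y y_max by (simp add: red_eq)
  have "milp_feasible (V, E) L t (lift y)" using lift_feasible[OF y assms(2)] .
  moreover have "sum (lift y) E = sum y reduced_traces" using sum_lift[of y "\<lambda>_. True"] by simp
  moreover have "sum w E \<le> sum y reduced_traces" if "milp_feasible (V, E) L t w" for w
    using y_max[OF collapse_frac_edge_packing[OF that]] sum_collapse_reduced_traces[OF that] by simp
  ultimately show ?thesis unfolding tau by blast
qed

end
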